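(* Quaternary Hermitian formally self-dual LCD codes with parameters $[32s,16s,6]_4$, $[40s,20s,7]_4$ and $[48s,24s,8]_4$ exist for every integer $s\ge1$.
   Context: Over $\mathbb{F}_4$ the Hermitian inner product is $(\mathbf{x},\mathbf{y})_H=\sum_i x_iy_i^{2}$, with dual $\mathcal{C}^{\perp_H}$. A code is Hermitian LCD if $\mathcal{C}\cap\mathcal{C}^{\perp_H}=\{0\}$, and Hermitian formally self-dual if it has the same weight distribution as $\mathcal{C}^{\perp_H}$. $[n,k,d]_4$ denotes length $n$, dimension $k$, minimum distance $d$. *)

theory Defs
  imports Main
begin

datatype gf4 = G0 | G1 | GW | GV  (* G0 = 0, G1 = 1, GW = w, GV = w^2 = w + 1 *)

(* additive structure: bit encoding G0=00, G1=10, GW=01, GV=11 *)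
fun gf4_add :: "gf4 \<Rightarrow> gf4 \<Rightarrow> gf4" where
  "gf4_add G0 y = y"
| "gf4_add x G0 = x"
| "gf4_add G1 G1 = G0" | "gf4_add G1 GW = GV" | "gf4_add G1 GV = GW"
| "gf4_add GW G1 = GV" | "gf4_add GW GW = G0" | "gf4_add GW GV = G1"
| "gf4_add GV G1 = GW" | "gf4_add GV GW = G1" | "gf4_add GV GV = G0"

fun gf4_mul :: "gf4 \<Rightarrow> gf4 \<Rightarrow> gf4" where
  "gf4_mul G0 y = G0"
| "gf4_mul x G0 = G0"
| "gf4_mul G1 y = y"
| "gf4_mul x G1 = x"
| "gf4_mul GW GW = GV" | "gf4_mul GW GV = G1"
| "gf4_mul GV GW = G1" | "gf4_mul GV GV = GW"

fun gf4_inv :: "gf4 \<Rightarrow> gf4" where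
  "gf4_inv G0 = G0" | "gf4_inv G1 = G1" | "gf4_inv GW = GV" | "gf4_inv GV = GW"

instantiation gf4 :: field
begin
definition "0 = G0"
definition "1 = G1"
definition "x + y = gf4_add x y"
definition "x * y = gf4_mul x y"
definition "uminus x = (x :: gf4)"
definition "x - y = gf4_add x y"
definition "inverse x = gf4_inv x"
definition "x div y = gf4_mul x (gf4_inv y)"
instance
proof
  fix a b c :: gf4
  show "a + b + c = a + (b + c)" unfolding plus_gf4_def
    by (cases a; cases b; cases c; simp)
  show "a + b = b + a" unfolding plus_gf4_def by (cases a; cases b; simp)
  show "0 + a = a" unfolding plus_gf4_def zero_gf4_def by simp
  show "- a + a = 0" unfolding plus_gf4_def zero_gf4_def uminus_gf4_def
    by (cases a; simp)
  show "a - b = a + - b" unfolding plus_gf4_def minus_gf4_def uminus_gf4_def by simp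
  show "a * b * c = a * (b * c)" unfolding times_gf4_def
    by (cases a; cases b; cases c; simp)
  show "a * b = b * a" unfolding times_gf4_def by (cases a; cases b; simp)
  show "1 * a = a" unfolding times_gf4_def one_gf4_def by (cases a; simp)
  show "(a + b) * c = a * c + b * c" unfolding times_gf4_def plus_gf4_def
    by (cases a; cases b; cases c; simp)
  show "(0::gf4) \<noteq> 1" unfolding zero_gf4_def one_gf4_def by simp
  show "a \<noteq> 0 \<Longrightarrow> inverse a * a = 1"
    unfolding zero_gf4_def one_gf4_def inverse_gf4_def times_gf4_def by (cases a; simp)
  show "a div b = a * inverse b" unfolding divide_gf4_def times_gf4_def inverse_gf4_def by simp
  show "inverse (0::gf4) = 0" unfolding inverse_gf4_def zero_gf4_def by simp
qed
end

lemma UNIV_gf4: "(UNIV :: gf4 set) = {0, 1, GW, GV}"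
  using gf4.exhaust by (auto simp: zero_gf4_def one_gf4_def)

text \<open>Vectors of length n over F_4 are functions nat => gf4 vanishing outside {..<n}.\<close>
definition vecs :: "nat \<Rightarrow> (nat \<Rightarrow> gf4) set" where
  "vecs n = {x. \<forall>i\<ge>n. x i = 0}"

definition linear_code :: "nat \<Rightarrow> nat \<Rightarrow> (nat \<Rightarrow> gf4) set \<Rightarrow> bool" where
  "linear_code n k C \<longleftrightarrow>
     (\<exists>b :: nat \<Rightarrow> nat \<Rightarrow> gf4. (\<forall>j<k. b j \<in> vecs n) \<and>
        bij_betw (\<lambda>c. (\<lambda>i. \<Sum>j<k. c j * b j i)) (vecs k) C)"

definition herm_ip :: "nat \<Rightarrow> (nat \<Rightarrow> gf4) \<Rightarrow> (nat \<Rightarrow> gf4) \<Rightarrow> gf4" where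
  "herm_ip n x y = (\<Sum>i<n. x i * (y i)^2)"

definition herm_dual :: "nat \<Rightarrow> (nat \<Rightarrow> gf4) set \<Rightarrow> (nat \<Rightarrow> gf4) set" where
  "herm_dual n C = {y \<in> vecs n. \<forall>x\<in>C. herm_ip n x y = 0}"

definition herm_LCD :: "nat \<Rightarrow> (nat \<Rightarrow> gf4) set \<Rightarrow> bool" where
  "herm_LCD n C \<longleftrightarrow> C \<inter> herm_dual n C = {\<lambda>i. 0}"

definition hweight :: "nat \<Rightarrow> (nat \<Rightarrow> gf4) \<Rightarrow> nat" where
  "hweight n x = card {i. i < n \<and> x i \<noteq> 0}"

definition hdist :: "nat \<Rightarrow> (nat \<Rightarrow> gf4) \<Rightarrow> (nat \<Rightarrow> gf4) \<Rightarrow> nat" where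
  "hdist n x y = card {i. i < n \<and> x i \<noteq> y i}"

definition herm_formally_self_dual :: "nat \<Rightarrow> (nat \<Rightarrow> gf4) set \<Rightarrow> bool" where
  "herm_formally_self_dual n C \<longleftrightarrow>
     (\<forall>w. card {x \<in> C. hweight n x = w} = card {x \<in> herm_dual n C. hweight n x = w})"

definition min_dist :: "nat \<Rightarrow> (nat \<Rightarrow> gf4) set \<Rightarrow> nat" where
  "min_dist n C = Min {hdist n x y | x y. x \<in> C \<and> y \<in> C \<and> x \<noteq> y}"

definition herm_fsd_LCD :: "nat \<Rightarrow> nat \<Rightarrow> nat \<Rightarrow> (nat \<Rightarrow> gf4) set \<Rightarrow> bool" where
  "herm_fsd_LCD n k d C \<longleftrightarrow> linear_code n k C \<and> min_dist n C = d \<and>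
     herm_LCD n C \<and> herm_formally_self_dual n C"

end

theory Submission
  imports Defs
begin

(*
  All codes are systematic, C = {(x, xA)}, for a k x k matrix A over F_4 whose transpose is its
  conjugate (conjugation being squaring). For such A the Hermitian dual of C consists exactly of
  the words (zA, z), the images of C under swapping the two halves of the coordinates; the swap
  preserves weights, so C is formally self-dual. A word (x, xA) = (zA, z) in C and its dual makes
  x + z a fixed vector of A, so C is LCD as soon as A + I is invertible. The minimum distance of C
  is the least value of wt x + wt (xA) over nonzero x.
  All of this is inherited by the block-diagonal matrix diag(A, ..., A), so the codes of lengths
  32s, 40s and 48s arise from 2s diagonal copies of matrices of sizes 8, 10 and 12, whose
  properties are verified by evaluation.
*)

section \<open>Vectors and matrices over F_4\<close>

lemma gf4_add_self [simp]: "(a::gf4) + a = 0"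
  by (cases a) (simp_all add: plus_gf4_def zero_gf4_def)

lemma gf4_add_eq_0_iff: "(a::gf4) + b = 0 \<longleftrightarrow> a = b"
  by (metis gf4_add_self add_diff_cancel_right')

lemma gf4_power4 [simp]: "(a::gf4) ^ 4 = a"
  by (cases a) (simp_all add: power4_eq_xxxx times_gf4_def)

lemma gf4_two_eq_0: "(2::gf4) = 0"
  by (metis gf4_add_self one_add_one)

lemma gf4_power2_add: "((a::gf4) + b) ^ 2 = a ^ 2 + b ^ 2"
  by (simp add: power2_sum gf4_two_eq_0)

lemma gf4_power2_sum: "(\<Sum>i\<in>I. f i :: gf4) ^ 2 = (\<Sum>i\<in>I. f i ^ 2)"
  by (induction I rule: infinite_finite_induct) (simp_all add: gf4_power2_add)

lemma gf4_power2_inj: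
  assumes "(a::gf4) ^ 2 = b ^ 2"
  shows "a = b"
proof -
  from assms have "(a ^ 2) ^ 2 = (b ^ 2) ^ 2"
    by simp
  then show ?thesis
    by simp
qed

lemma sum_lessThan_mult:
  "(\<Sum>i<m * k. f i) = (\<Sum>b<m. \<Sum>r<k. f (b * k + r) :: 'a::comm_monoid_add)" for m k :: nat
proof (induction m)
  case (Suc m)
  have "(\<Sum>i<n + k. f i) = (\<Sum>i<n. f i) + (\<Sum>r<k. f (n + r))" for n
    by (induction k) (simp_all add: add.assoc)
  from this[of "m * k"] Suc show ?case
    by (simp add: add.commute)
qed simp

lemma hweight_eq_sum: "hweight n x = (\<Sum>i<n. if x i \<noteq> 0 then 1 else 0)"
proof -
  have "{i. i < n \<and> x i \<noteq> 0} = {i\<in>{..<n}. x i \<noteq> 0}"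
    by auto
  then show ?thesis
    by (simp add: hweight_def sum.inter_filter[symmetric])
qed

lemma hweight_cong: "(\<And>i. i < n \<Longrightarrow> x i = y i) \<Longrightarrow> hweight n x = hweight n y"
  unfolding hweight_def by (metis (mono_tags, lifting))

lemma hweight_zero [simp]: "hweight n (\<lambda>i. 0) = 0"
  by (simp add: hweight_def)

lemma hweight_eq_0_iff: "hweight n x = 0 \<longleftrightarrow> (\<forall>i<n. x i = 0)"
  by (auto simp: hweight_def)

definition block :: "nat \<Rightarrow> (nat \<Rightarrow> gf4) \<Rightarrow> nat \<Rightarrow> nat \<Rightarrow> gf4" where
  "block k v b r = (if r < k then v (b * k + r) else 0)"

lemma block_in_vecs: "block k v b \<in> vecs k"
  by (simp add: vecs_def block_def)

lemma block_index_less: "b < m \<Longrightarrow> r < k \<Longrightarrow> b * k + r < m * (k::nat)"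
  using div_less_iff_less_mult[of k "b * k + r" m] by simp

lemma block_div_mod: "0 < k \<Longrightarrow> block k v (l div k) (l mod k) = v l"
  by (simp add: block_def)

lemma vecs_eq_zero_iff_blocks:
  assumes "0 < k" "v \<in> vecs (m * k)"
  shows "v = (\<lambda>i. 0) \<longleftrightarrow> (\<forall>b<m. block k v b = (\<lambda>i. 0))"
proof
  assume "\<forall>b<m. block k v b = (\<lambda>i. 0)"
  then have "v l = 0" if "l < m * k" for l
    using that assms(1) block_div_mod[of k v l] less_mult_imp_div_less[of l m k] by auto
  with assms(2) show "v = (\<lambda>i. 0)"
    by (auto simp: vecs_def fun_eq_iff not_less[symmetric])
qed (simp add: block_def fun_eq_iff)

lemma block_of_vecs: "x \<in> vecs k \<Longrightarrow> block k x b = (if b = 0 then x else (\<lambda>i. 0))"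
proof (cases "b = 0")
  case False
  then have "k \<le> b * k + r" for r
    by (cases b) auto
  moreover assume "x \<in> vecs k"
  ultimately show ?thesis
    using False by (simp add: block_def vecs_def fun_eq_iff)
qed (auto simp: block_def vecs_def fun_eq_iff)

lemma hweight_blocks: "hweight (m * k) v = (\<Sum>b<m. hweight k (block k v b))"
  by (simp add: hweight_eq_sum sum_lessThan_mult block_def)

lemma hweight_halves: "hweight (2 * K) v = hweight K v + hweight K (\<lambda>r. v (K + r))"
  unfolding hweight_blocks by (simp add: lessThan_nat_numeral hweight_eq_sum block_def)

definition unit_vec :: "nat \<Rightarrow> nat \<Rightarrow> gf4" where
  "unit_vec j i = (if i = j then 1 else 0)"

lemma unit_vec_in_vecs: "j < K \<Longrightarrow> unit_vec j \<in> vecs K"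
  by (simp add: vecs_def unit_vec_def)

lemma hweight_unit_vec: "j < n \<Longrightarrow> hweight n (unit_vec j) = 1"
proof -
  assume "j < n"
  then have "{i. i < n \<and> unit_vec j i \<noteq> 0} = {j}"
    by (auto simp: unit_vec_def)
  then show ?thesis
    by (simp add: hweight_def)
qed

lemma sum_unit_vec_right: "i < K \<Longrightarrow> (\<Sum>j<K. f j * unit_vec j i) = f i"
  by (simp add: unit_vec_def if_distrib cong: if_cong)

lemma sum_unit_vec_left: "i < K \<Longrightarrow> (\<Sum>j<K. unit_vec i j * f j) = f i"
  by (simp add: unit_vec_def if_distrib[of "\<lambda>a. a * _"] cong: if_cong)

definition vec_mat :: "nat \<Rightarrow> (nat \<Rightarrow> gf4) \<Rightarrow> (nat \<Rightarrow> nat \<Rightarrow> gf4) \<Rightarrow> nat \<Rightarrow> gf4" where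
  "vec_mat K x A l = (\<Sum>j<K. x j * A j l)"

lemma vec_mat_cong: "(\<And>j. j < K \<Longrightarrow> x j = y j) \<Longrightarrow> vec_mat K x A = vec_mat K y A"
  unfolding vec_mat_def by (intro ext sum.cong) auto

lemma vec_mat_zero [simp]: "vec_mat K (\<lambda>j. 0) A = (\<lambda>l. 0)"
  by (simp add: vec_mat_def fun_eq_iff)

lemma vec_mat_add: "vec_mat K (\<lambda>j. x j + y j) A l = vec_mat K x A l + vec_mat K y A l"
  by (simp add: vec_mat_def distrib_right sum.distrib)

lemma vec_mat_unit_vec: "j < K \<Longrightarrow> vec_mat K (unit_vec j) A l = A j l"
  by (simp add: vec_mat_def sum_unit_vec_left)

lemma vec_mat_inverse:
  assumes "\<forall>i<k. \<forall>j<k. (\<Sum>l<k. A i l * B l j) = unit_vec i j" "l < k"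
  shows "vec_mat k (vec_mat k x A) B l = x l"
proof -
  have "vec_mat k (vec_mat k x A) B l = (\<Sum>i<k. x i * (\<Sum>j<k. A i j * B j l))"
    unfolding vec_mat_def sum_distrib_right sum_distrib_left
    by (subst sum.swap) (simp add: mult.assoc)
  also have "\<dots> = (\<Sum>i<k. x i * unit_vec i l)"
    using assms by (intro sum.cong) auto
  also have "\<dots> = x l"
    using assms(2) by (rule sum_unit_vec_right)
  finally show ?thesis .
qed

section \<open>Systematic codes\<close>

definition sys_encode :: "nat \<Rightarrow> (nat \<Rightarrow> nat \<Rightarrow> gf4) \<Rightarrow> (nat \<Rightarrow> gf4) \<Rightarrow> nat \<Rightarrow> gf4" where
  "sys_encode K A x i = (if i < K then x i else if i < 2 * K then vec_mat K x A (i - K) else 0)"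

definition sys_code :: "nat \<Rightarrow> (nat \<Rightarrow> nat \<Rightarrow> gf4) \<Rightarrow> (nat \<Rightarrow> gf4) set" where
  "sys_code K A = sys_encode K A ` vecs K"

definition sys_weight :: "nat \<Rightarrow> (nat \<Rightarrow> nat \<Rightarrow> gf4) \<Rightarrow> (nat \<Rightarrow> gf4) \<Rightarrow> nat" where
  "sys_weight K A x = hweight K x + hweight K (vec_mat K x A)"

lemma sys_weight_zero [simp]: "sys_weight K A (\<lambda>i. 0) = 0"
  by (simp add: sys_weight_def)

text \<open>If \<open>x\<close> and \<open>xA\<close> both have more than \<open>t\<close> nonzero entries, the weight is at least
  \<open>2 t + 2\<close>; otherwise \<open>x\<close> is light for \<open>A\<close>, or \<open>y = xA\<close> is light for \<open>B = A\<^sup>-\<^sup>1\<close>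
  since \<open>yB = x\<close>.\<close>

lemma sys_weight_ge_of_inverse:
  assumes inverse: "\<forall>i<k. \<forall>j<k. (\<Sum>l<k. A i l * B l j) = unit_vec i j"
    and light_A: "\<And>x. 0 < hweight k x \<Longrightarrow> hweight k x \<le> t \<Longrightarrow> d \<le> sys_weight k A x"
    and light_B: "\<And>y. 0 < hweight k y \<Longrightarrow> hweight k y \<le> t \<Longrightarrow> d \<le> sys_weight k B y"
    and "0 < hweight k x" "d \<le> 2 * t + 2"
  shows "d \<le> sys_weight k A x"
proof -
  define y where "y = vec_mat k x A"
  have "vec_mat k y B l = x l" if "l < k" for l
    using inverse that by (simp add: y_def vec_mat_inverse)
  then have yB: "hweight k (vec_mat k y B) = hweight k x"
    by (rule hweight_cong)
  have "0 < hweight k y"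
  proof (rule ccontr)
    assume "\<not> 0 < hweight k y"
    then have "vec_mat k y B = vec_mat k (\<lambda>i. 0) B"
      by (intro vec_mat_cong) (simp add: hweight_eq_0_iff)
    with yB \<open>0 < hweight k x\<close> show False
      by simp
  qed
  with assms(4,5) yB light_A[of x] light_B[of y] show ?thesis
    by (cases "hweight k x \<le> t"; cases "hweight k y \<le> t") (auto simp: sys_weight_def y_def)
qed

definition hermitian :: "nat \<Rightarrow> (nat \<Rightarrow> nat \<Rightarrow> gf4) \<Rightarrow> bool" where
  "hermitian K A \<longleftrightarrow> (\<forall>i<K. \<forall>j<K. A j i = A i j ^ 2)"

definition fixed_vector_free :: "nat \<Rightarrow> (nat \<Rightarrow> nat \<Rightarrow> gf4) \<Rightarrow> bool" where
  "fixed_vector_free K A \<longleftrightarrow> (\<forall>u\<in>vecs K. (\<forall>l<K. vec_mat K u A l = u l) \<longrightarrow> u = (\<lambda>i. 0))"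

lemma sys_encode_in_vecs: "sys_encode K A x \<in> vecs (2 * K)"
  by (simp add: vecs_def sys_encode_def)

lemma sys_encode_zero [simp]: "sys_encode K A (\<lambda>i. 0) = (\<lambda>i. 0)"
  by (simp add: sys_encode_def fun_eq_iff)

lemma sys_encode_add:
  "sys_encode K A (\<lambda>i. x i + y i) = (\<lambda>i. sys_encode K A x i + sys_encode K A y i)"
  by (simp add: sys_encode_def vec_mat_add fun_eq_iff)

lemma sys_encode_linear: "sys_encode K A c = (\<lambda>i. \<Sum>j<K. c j * sys_encode K A (unit_vec j) i)"
proof
  fix i
  have "(\<Sum>j<K. c j * vec_mat K (unit_vec j) A (i - K)) = vec_mat K c A (i - K)"
    unfolding vec_mat_def[of K c] by (rule sum.cong) (simp_all add: vec_mat_unit_vec)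
  then show "sys_encode K A c i = (\<Sum>j<K. c j * sys_encode K A (unit_vec j) i)"
    by (simp add: sys_encode_def sum_unit_vec_right)
qed

lemma sys_encode_inj: "inj_on (sys_encode K A) (vecs K)"
proof (rule inj_onI)
  fix x y
  assume x: "x \<in> vecs K" and y: "y \<in> vecs K" and eq: "sys_encode K A x = sys_encode K A y"
  show "x = y"
  proof
    fix i
    show "x i = y i"
      using x y fun_cong[OF eq, of i] by (cases "i < K") (simp_all add: sys_encode_def vecs_def)
  qed
qed

lemma hweight_sys_encode: "hweight (2 * K) (sys_encode K A x) = sys_weight K A x"
  unfolding hweight_halves sys_weight_def
  by (intro arg_cong2[where f = "(+)"] hweight_cong) (simp_all add: sys_encode_def)

lemma linear_code_sys_code: "linear_code (2 * K) K (sys_code K A)"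
  unfolding linear_code_def
proof (intro exI conjI allI impI)
  show "sys_encode K A (unit_vec j) \<in> vecs (2 * K)" for j
    by (rule sys_encode_in_vecs)
  show "bij_betw (\<lambda>c i. \<Sum>j<K. c j * sys_encode K A (unit_vec j) i) (vecs K) (sys_code K A)"
    unfolding sys_encode_linear[symmetric] sys_code_def
    using sys_encode_inj by (simp add: bij_betw_def)
qed

lemma herm_ip_sys_encode:
  "herm_ip (2 * K) (sys_encode K A x) y = (\<Sum>j<K. x j * (y j ^ 2 + (\<Sum>l<K. A j l * y (K + l) ^ 2)))"
proof -
  have "herm_ip (2 * K) (sys_encode K A x) y
      = (\<Sum>j<K. x j * y j ^ 2) + (\<Sum>l<K. vec_mat K x A l * y (K + l) ^ 2)"
    by (simp add: herm_ip_def sum_lessThan_mult lessThan_nat_numeral sys_encode_def add.commute)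
  also have "(\<Sum>l<K. vec_mat K x A l * y (K + l) ^ 2) = (\<Sum>j<K. x j * (\<Sum>l<K. A j l * y (K + l) ^ 2))"
    unfolding vec_mat_def sum_distrib_right sum_distrib_left
    by (subst sum.swap) (simp add: mult.assoc)
  finally show ?thesis
    by (simp add: distrib_left sum.distrib)
qed

lemma herm_dual_sys_code_iff:
  "y \<in> herm_dual (2 * K) (sys_code K A) \<longleftrightarrow>
     y \<in> vecs (2 * K) \<and> (\<forall>j<K. y j ^ 2 = (\<Sum>l<K. A j l * y (K + l) ^ 2))"
proof -
  have "(\<forall>x\<in>vecs K. herm_ip (2 * K) (sys_encode K A x) y = 0) \<longleftrightarrow>
      (\<forall>j<K. y j ^ 2 + (\<Sum>l<K. A j l * y (K + l) ^ 2) = 0)"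
  proof
    assume orth: "\<forall>x\<in>vecs K. herm_ip (2 * K) (sys_encode K A x) y = 0"
    show "\<forall>j<K. y j ^ 2 + (\<Sum>l<K. A j l * y (K + l) ^ 2) = 0"
    proof (intro allI impI)
      fix j
      assume "j < K"
      with orth have "herm_ip (2 * K) (sys_encode K A (unit_vec j)) y = 0"
        by (simp add: unit_vec_in_vecs)
      with \<open>j < K\<close> show "y j ^ 2 + (\<Sum>l<K. A j l * y (K + l) ^ 2) = 0"
        by (simp add: herm_ip_sys_encode sum_unit_vec_left)
    qed
  qed (simp add: herm_ip_sys_encode)
  then show ?thesis
    by (simp add: herm_dual_def sys_code_def gf4_add_eq_0_iff)
qed

lemma vec_mat_power2:
  assumes "hermitian K A" "j < K"
  shows "vec_mat K z A j ^ 2 = (\<Sum>l<K. A j l * z l ^ 2)"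
proof -
  have "vec_mat K z A j ^ 2 = (\<Sum>l<K. z l ^ 2 * A l j ^ 2)"
    unfolding vec_mat_def gf4_power2_sum power_mult_distrib ..
  also have "\<dots> = (\<Sum>l<K. A j l * z l ^ 2)"
  proof (rule sum.cong)
    fix l
    assume "l \<in> {..<K}"
    with assms have "A l j = A j l ^ 2"
      unfolding hermitian_def by blast
    then show "z l ^ 2 * A l j ^ 2 = A j l * z l ^ 2"
      by (simp add: mult.commute)
  qed simp
  finally show ?thesis .
qed

definition swap_halves :: "nat \<Rightarrow> (nat \<Rightarrow> gf4) \<Rightarrow> nat \<Rightarrow> gf4" where
  "swap_halves K v i = (if i < K then v (K + i) else if i < 2 * K then v (i - K) else 0)"

lemma swap_halves_swap_halves: "v \<in> vecs (2 * K) \<Longrightarrow> swap_halves K (swap_halves K v) = v"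
  by (auto simp: fun_eq_iff swap_halves_def vecs_def)

lemma hweight_swap_halves: "hweight (2 * K) (swap_halves K v) = hweight (2 * K) v"
proof -
  have "hweight K (swap_halves K v) = hweight K (\<lambda>r. v (K + r))"
    and "hweight K (\<lambda>r. swap_halves K v (K + r)) = hweight K v"
    by (auto simp: swap_halves_def intro: hweight_cong)
  then show ?thesis
    by (simp add: hweight_halves)
qed

lemma herm_dual_sys_code:
  assumes "hermitian K A"
  shows "herm_dual (2 * K) (sys_code K A) = swap_halves K ` sys_code K A"
proof (intro equalityI subsetI)
  fix y
  assume y: "y \<in> herm_dual (2 * K) (sys_code K A)"
  define z where "z = block K y 1"
  have "y = swap_halves K (sys_encode K A z)"
  proof
    fix i
    show "y i = swap_halves K (sys_encode K A z) i"
    proof (cases "i < K")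
      case True
      with y assms have "y i ^ 2 = vec_mat K z A i ^ 2"
        by (simp add: herm_dual_sys_code_iff vec_mat_power2 z_def block_def)
      with True show ?thesis
        by (simp add: gf4_power2_inj swap_halves_def sys_encode_def)
    next
      case False
      with y show ?thesis
        by (auto simp: herm_dual_sys_code_iff vecs_def swap_halves_def sys_encode_def z_def block_def)
    qed
  qed
  then show "y \<in> swap_halves K ` sys_code K A"
    by (auto simp: sys_code_def z_def block_in_vecs)
next
  fix y
  assume "y \<in> swap_halves K ` sys_code K A"
  then obtain z where y: "y = swap_halves K (sys_encode K A z)"
    by (auto simp: sys_code_def)
  have "y j ^ 2 = (\<Sum>l<K. A j l * y (K + l) ^ 2)" if "j < K" for j
  proof -
    have "(\<Sum>l<K. A j l * y (K + l) ^ 2) = (\<Sum>l<K. A j l * z l ^ 2)"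
      by (rule sum.cong) (simp_all add: y swap_halves_def sys_encode_def)
    with that assms show ?thesis
      by (simp add: y swap_halves_def sys_encode_def vec_mat_power2)
  qed
  moreover have "y \<in> vecs (2 * K)"
    by (simp add: y vecs_def swap_halves_def)
  ultimately show "y \<in> herm_dual (2 * K) (sys_code K A)"
    by (simp add: herm_dual_sys_code_iff)
qed

lemma herm_formally_self_dual_sys_code:
  assumes "hermitian K A"
  shows "herm_formally_self_dual (2 * K) (sys_code K A)"
  unfolding herm_formally_self_dual_def herm_dual_sys_code[OF assms]
proof
  fix w
  let ?C = "{x \<in> sys_code K A. hweight (2 * K) x = w}"
  have "inj_on (swap_halves K) ?C"
    by (rule inj_on_inverseI[where g = "swap_halves K"])
      (auto simp: sys_code_def sys_encode_in_vecs swap_halves_swap_halves)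
  moreover have "{x \<in> swap_halves K ` sys_code K A. hweight (2 * K) x = w} = swap_halves K ` ?C"
    by (auto simp: hweight_swap_halves)
  ultimately show "card ?C = card {x \<in> swap_halves K ` sys_code K A. hweight (2 * K) x = w}"
    by (simp add: card_image)
qed

lemma herm_LCD_sys_code:
  assumes "hermitian K A" "fixed_vector_free K A"
  shows "herm_LCD (2 * K) (sys_code K A)"
  unfolding herm_LCD_def herm_dual_sys_code[OF assms(1)]
proof (intro equalityI subsetI)
  fix v
  assume "v \<in> sys_code K A \<inter> swap_halves K ` sys_code K A"
  then obtain x z where x: "x \<in> vecs K" and "z \<in> vecs K"
    and vx: "v = sys_encode K A x" and vz: "v = swap_halves K (sys_encode K A z)"
    by (auto simp: sys_code_def)
  have x_eq: "x i = vec_mat K z A i" and z_eq: "vec_mat K x A i = z i" if "i < K" for i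
    using that fun_cong[OF vx, of i] fun_cong[OF vz, of i]
      fun_cong[OF vx, of "K + i"] fun_cong[OF vz, of "K + i"]
    by (simp_all add: sys_encode_def swap_halves_def)
  \<comment> \<open>\<open>x + z\<close> is fixed by \<open>A\<close>, hence zero; so \<open>x = z\<close> is itself fixed by \<open>A\<close>.\<close>
  define u where "u i = (if i < K then x i + z i else 0)" for i
  have "u \<in> vecs K"
    by (simp add: u_def vecs_def)
  moreover have "vec_mat K u A l = u l" if "l < K" for l
  proof -
    have "vec_mat K u A l = vec_mat K x A l + vec_mat K z A l"
      by (simp add: vec_mat_cong[of K u "\<lambda>i. x i + z i"] u_def vec_mat_add)
    with that show ?thesis
      by (simp add: x_eq z_eq u_def add.commute)
  qed
  ultimately have u0: "u = (\<lambda>i. 0)"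
    using assms(2) by (simp add: fixed_vector_free_def)
  have "x i = z i" if "i < K" for i
    using that fun_cong[OF u0, of i] by (simp add: u_def gf4_add_eq_0_iff)
  then have "vec_mat K x A l = x l" if "l < K" for l
    using that z_eq by simp
  with x assms(2) have "x = (\<lambda>i. 0)"
    by (simp add: fixed_vector_free_def)
  with vx show "v \<in> {\<lambda>i. 0}"
    by simp
next
  fix v :: "nat \<Rightarrow> gf4"
  assume "v \<in> {\<lambda>i. 0}"
  moreover have "(\<lambda>i. 0) \<in> vecs K"
    by (simp add: vecs_def)
  ultimately show "v \<in> sys_code K A \<inter> swap_halves K ` sys_code K A"
    by (force simp: sys_code_def swap_halves_def)
qed

lemma hdist_eq_hweight_add: "hdist n x y = hweight n (\<lambda>i. x i + y i)"
  by (simp add: hdist_def hweight_def gf4_add_eq_0_iff)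

lemma min_dist_eqI:
  assumes add_closed: "\<And>x y. x \<in> C \<Longrightarrow> y \<in> C \<Longrightarrow> (\<lambda>i. x i + y i) \<in> C"
    and lower: "\<And>c. c \<in> C \<Longrightarrow> c \<noteq> (\<lambda>i. 0) \<Longrightarrow> d \<le> hweight n c"
    and attained: "c0 \<in> C" "c0 \<noteq> (\<lambda>i. 0)" "hweight n c0 = d"
  shows "min_dist n C = d"
  unfolding min_dist_def
proof (rule Min_eqI)
  let ?D = "{hdist n x y |x y. x \<in> C \<and> y \<in> C \<and> x \<noteq> y}"
  have "hdist n x y \<le> card {..<n}" for x y
    unfolding hdist_def by (rule card_mono) auto
  then have "?D \<subseteq> {..n}"
    by auto
  then show "finite ?D"
    by (rule finite_subset) simp
  show "d \<le> e" if e: "e \<in> ?D" for e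
  proof -
    obtain x y where "e = hdist n x y" "x \<in> C" "y \<in> C" "x \<noteq> y"
      using e by blast
    moreover have "(\<lambda>i. x i + y i) \<noteq> (\<lambda>i. 0)"
      using \<open>x \<noteq> y\<close> by (auto simp: fun_eq_iff gf4_add_eq_0_iff)
    ultimately show ?thesis
      using add_closed lower by (simp add: hdist_eq_hweight_add)
  qed
  have "(\<lambda>i. 0) \<in> C"
    using add_closed[OF attained(1) attained(1)] by simp
  with attained show "d \<in> ?D"
    by (force simp: hdist_eq_hweight_add)
qed

definition sys_min_weight :: "nat \<Rightarrow> (nat \<Rightarrow> nat \<Rightarrow> gf4) \<Rightarrow> nat \<Rightarrow> bool" where
  "sys_min_weight K A d \<longleftrightarrow>
     (\<forall>x\<in>vecs K. x \<noteq> (\<lambda>i. 0) \<longrightarrow> d \<le> sys_weight K A x) \<and>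
     (\<exists>x\<in>vecs K. x \<noteq> (\<lambda>i. 0) \<and> sys_weight K A x = d)"

lemma min_dist_sys_code:
  assumes "sys_min_weight K A d"
  shows "min_dist (2 * K) (sys_code K A) = d"
proof -
  from assms have lower: "\<forall>x\<in>vecs K. x \<noteq> (\<lambda>i. 0) \<longrightarrow> d \<le> sys_weight K A x"
    by (simp add: sys_min_weight_def)
  from assms obtain x0 where attained: "x0 \<in> vecs K" "x0 \<noteq> (\<lambda>i. 0)" "sys_weight K A x0 = d"
    by (auto simp: sys_min_weight_def)
  show ?thesis
  proof (rule min_dist_eqI)
    show "(\<lambda>i. c i + c' i) \<in> sys_code K A" if cs: "c \<in> sys_code K A" "c' \<in> sys_code K A" for c c'
    proof -
      obtain x x' where "x \<in> vecs K" "x' \<in> vecs K" "c = sys_encode K A x" "c' = sys_encode K A x'"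
        using cs by (auto simp: sys_code_def)
      then have "(\<lambda>i. c i + c' i) = sys_encode K A (\<lambda>i. x i + x' i)"
        and "(\<lambda>i. x i + x' i) \<in> vecs K"
        by (simp_all add: sys_encode_add vecs_def)
      then show ?thesis
        by (simp add: sys_code_def)
    qed
    show "d \<le> hweight (2 * K) c" if "c \<in> sys_code K A" "c \<noteq> (\<lambda>i. 0)" for c
      using that lower by (auto simp: sys_code_def hweight_sys_encode)
    have "sys_encode K A x0 \<noteq> sys_encode K A (\<lambda>i. 0)"
      using attained sys_encode_inj by (auto simp: inj_on_def vecs_def)
    then show "sys_encode K A x0 \<noteq> (\<lambda>i. 0)"
      by simp
    show "sys_encode K A x0 \<in> sys_code K A" "hweight (2 * K) (sys_encode K A x0) = d"
      using attained by (simp_all add: sys_code_def hweight_sys_encode)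
  qed
qed

lemma herm_fsd_LCD_sys_code:
  assumes "hermitian K A" "fixed_vector_free K A" "sys_min_weight K A d"
  shows "herm_fsd_LCD (2 * K) K d (sys_code K A)"
  using assms linear_code_sys_code min_dist_sys_code herm_LCD_sys_code
    herm_formally_self_dual_sys_code
  by (simp add: herm_fsd_LCD_def)

section \<open>Block-diagonal matrices\<close>

definition block_diag :: "nat \<Rightarrow> (nat \<Rightarrow> nat \<Rightarrow> gf4) \<Rightarrow> nat \<Rightarrow> nat \<Rightarrow> gf4" where
  "block_diag k A i j = (if i div k = j div k then A (i mod k) (j mod k) else 0)"

lemma hermitian_block_diag:
  assumes "0 < k" "hermitian k A"
  shows "hermitian n (block_diag k A)"
  unfolding hermitian_def
proof (intro allI impI)
  fix i j
  have "i mod k < k" "j mod k < k"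
    using assms(1) by simp_all
  with assms(2) have "A (j mod k) (i mod k) = A (i mod k) (j mod k) ^ 2"
    unfolding hermitian_def by blast
  then show "block_diag k A j i = block_diag k A i j ^ 2"
    by (simp add: block_diag_def eq_commute)
qed

lemma vec_mat_block_diag:
  assumes "0 < k" "b < m" "r < k"
  shows "vec_mat (m * k) x (block_diag k A) (b * k + r) = vec_mat k (block k x b) A r"
proof -
  have "vec_mat (m * k) x (block_diag k A) (b * k + r)
      = (\<Sum>b'<m. \<Sum>r'<k. x (b' * k + r') * block_diag k A (b' * k + r') (b * k + r))"
    unfolding vec_mat_def by (rule sum_lessThan_mult)
  also have "\<dots> = (\<Sum>b'<m. if b' = b then vec_mat k (block k x b) A r else 0)"
    using assms by (intro sum.cong) (auto simp: block_diag_def vec_mat_def block_def)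
  also have "\<dots> = vec_mat k (block k x b) A r"
    using assms by simp
  finally show ?thesis .
qed

lemma sys_weight_block_diag:
  assumes "0 < k"
  shows "sys_weight (m * k) (block_diag k A) x = (\<Sum>b<m. sys_weight k A (block k x b))"
proof -
  have "hweight k (block k (vec_mat (m * k) x (block_diag k A)) b) = hweight k (vec_mat k (block k x b) A)"
    if "b < m" for b
    using assms that by (intro hweight_cong) (simp add: block_def vec_mat_block_diag)
  then show ?thesis
    by (simp add: sys_weight_def hweight_blocks sum.distrib)
qed

lemma sys_weight_block_diag_of_vecs:
  assumes "0 < k" "0 < m" "x \<in> vecs k"
  shows "sys_weight (m * k) (block_diag k A) x = sys_weight k A x"
proof -
  have "sys_weight (m * k) (block_diag k A) x = (\<Sum>b<m. if b = 0 then sys_weight k A x else 0)"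
    unfolding sys_weight_block_diag[OF assms(1)] using assms(3)
    by (intro sum.cong) (simp_all add: block_of_vecs)
  with assms(2) show ?thesis
    by simp
qed

lemma fixed_vector_free_block_diag:
  assumes "0 < k" "fixed_vector_free k A"
  shows "fixed_vector_free (m * k) (block_diag k A)"
  unfolding fixed_vector_free_def
proof (intro ballI impI)
  fix u
  assume u: "u \<in> vecs (m * k)"
    and fixed: "\<forall>l<m * k. vec_mat (m * k) u (block_diag k A) l = u l"
  have "block k u b = (\<lambda>i. 0)" if "b < m" for b
  proof -
    have "vec_mat k (block k u b) A r = block k u b r" if "r < k" for r
      using fixed assms(1) \<open>b < m\<close> that
      by (simp add: block_def block_index_less flip: vec_mat_block_diag)
    with assms(2) show ?thesis
      by (simp add: fixed_vector_free_def block_in_vecs)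
  qed
  with assms(1) u show "u = (\<lambda>i. 0)"
    by (simp add: vecs_eq_zero_iff_blocks)
qed

lemma sys_min_weight_block_diag:
  assumes "0 < k" "0 < m" "sys_min_weight k A d"
  shows "sys_min_weight (m * k) (block_diag k A) d"
  unfolding sys_min_weight_def
proof
  show "\<forall>x\<in>vecs (m * k). x \<noteq> (\<lambda>i. 0) \<longrightarrow> d \<le> sys_weight (m * k) (block_diag k A) x"
  proof (intro ballI impI)
    fix x
    assume "x \<in> vecs (m * k)" "x \<noteq> (\<lambda>i. 0)"
    with assms(1) obtain b where b: "b < m" "block k x b \<noteq> (\<lambda>i. 0)"
      by (auto simp: vecs_eq_zero_iff_blocks)
    with assms(3) have "d \<le> sys_weight k A (block k x b)"
      by (simp add: sys_min_weight_def block_in_vecs)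
    also have "\<dots> \<le> (\<Sum>b<m. sys_weight k A (block k x b))"
      using b by (intro member_le_sum) auto
    finally show "d \<le> sys_weight (m * k) (block_diag k A) x"
      by (simp add: sys_weight_block_diag assms(1))
  qed
  from assms(3) obtain x0 where x0: "x0 \<in> vecs k" "x0 \<noteq> (\<lambda>i. 0)" "sys_weight k A x0 = d"
    by (auto simp: sys_min_weight_def)
  moreover have "vecs k \<subseteq> vecs (m * k)"
    using assms(2) by (cases m) (auto simp: vecs_def)
  ultimately show "\<exists>x\<in>vecs (m * k). x \<noteq> (\<lambda>i. 0) \<and> sys_weight (m * k) (block_diag k A) x = d"
    using assms(1,2) by (auto simp: sys_weight_block_diag_of_vecs)
qed

lemma herm_fsd_LCD_block_diag:
  assumes "0 < k" "0 < m" "hermitian k A" "fixed_vector_free k A" "sys_min_weight k A d"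
  shows "herm_fsd_LCD (2 * (m * k)) (m * k) d (sys_code (m * k) (block_diag k A))"
  using assms
  by (intro herm_fsd_LCD_sys_code hermitian_block_diag fixed_vector_free_block_diag
      sys_min_weight_block_diag)

section \<open>Certificates checked by evaluation\<close>

definition mat_of :: "gf4 list list \<Rightarrow> nat \<Rightarrow> nat \<Rightarrow> gf4" where
  "mat_of M i j = M ! i ! j"

definition square_mat :: "nat \<Rightarrow> gf4 list list \<Rightarrow> bool" where
  "square_mat k M \<longleftrightarrow> length M = k \<and> list_all (\<lambda>r. length r = k) M"

definition list_weight :: "gf4 list \<Rightarrow> nat" where
  "list_weight xs = length (filter (\<lambda>a. a \<noteq> 0) xs)"

fun lin_comb :: "nat \<Rightarrow> gf4 list \<Rightarrow> gf4 list list \<Rightarrow> gf4 list" where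
  "lin_comb k (c # cs) (r # rs) = map2 (+) (map ((*) c) r) (lin_comb k cs rs)"
| "lin_comb k _ _ = replicate k 0"

definition id_mat_list :: "nat \<Rightarrow> gf4 list list" where
  "id_mat_list k = map (\<lambda>i. map (\<lambda>j. if i = j then 1 else 0) [0..<k]) [0..<k]"

text \<open>\<open>low_weight_check d rs t v w\<close> runs over the coefficient vectors for the rows \<open>rs\<close> with
  at most \<open>t\<close> nonzero entries; \<open>v\<close> is the combination of the rows already passed and \<open>w\<close> the
  number of nonzero coefficients chosen for them.\<close>

fun low_weight_check :: "nat \<Rightarrow> gf4 list list \<Rightarrow> nat \<Rightarrow> gf4 list \<Rightarrow> nat \<Rightarrow> bool" where
  "low_weight_check d (r # rs) (Suc t) v w \<longleftrightarrow>
     low_weight_check d rs (Suc t) v w \<and>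
     (\<forall>c\<in>{1, GW, GV}. low_weight_check d rs t (map2 (+) v (map ((*) c) r)) (Suc w))"
| "low_weight_check d _ _ v w \<longleftrightarrow> w = 0 \<or> d \<le> w + list_weight v"

definition sys_certificate :: "nat \<Rightarrow> nat \<Rightarrow> gf4 list list \<Rightarrow> gf4 list list \<Rightarrow> gf4 list list \<Rightarrow> bool" where
  "sys_certificate k d A B N \<longleftrightarrow>
     square_mat k A \<and> square_mat k B \<and> square_mat k N \<and>
     list_all (\<lambda>i. list_all (\<lambda>j. A ! j ! i = (A ! i ! j) ^ 2) [0..<k]) [0..<k] \<and>
     map (\<lambda>r. lin_comb k r B) A = id_mat_list k \<and>
     map (\<lambda>r. lin_comb k r N) (map2 (map2 (+)) A (id_mat_list k)) = id_mat_list k \<and>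
     low_weight_check d A ((d - 1) div 2) (replicate k 0) 0 \<and>
     low_weight_check d B ((d - 1) div 2) (replicate k 0) 0 \<and>
     list_ex (\<lambda>r. Suc (list_weight r) = d) A"

lemma length_lin_comb: "\<forall>r\<in>set rs. length r = k \<Longrightarrow> length (lin_comb k cs rs) = k"
  by (induction k cs rs rule: lin_comb.induct) auto

lemma nth_lin_comb:
  "length cs = length rs \<Longrightarrow> \<forall>r\<in>set rs. length r = k \<Longrightarrow> l < k \<Longrightarrow>
    lin_comb k cs rs ! l = (\<Sum>j<length cs. cs ! j * rs ! j ! l)"
  by (induction k cs rs rule: lin_comb.induct)
    (auto simp: length_lin_comb sum.lessThan_Suc_shift simp del: sum.lessThan_Suc)

lemma square_mat_rows: "square_mat k M \<Longrightarrow> \<forall>r\<in>set M. length r = k"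
  by (simp add: square_mat_def list_all_iff)

lemma lin_comb_eq_vec_mat:
  assumes "square_mat k M" "l < k"
  shows "lin_comb k (map x [0..<k]) M ! l = vec_mat k x (mat_of M) l"
proof -
  have "lin_comb k (map x [0..<k]) M ! l = (\<Sum>j<k. map x [0..<k] ! j * M ! j ! l)"
    using assms nth_lin_comb[of "map x [0..<k]" M k l]
    by (simp add: square_mat_rows) (simp add: square_mat_def)
  also have "\<dots> = vec_mat k x (mat_of M) l"
    by (simp add: vec_mat_def mat_of_def)
  finally show ?thesis .
qed

lemma list_weight_eq_hweight: "list_weight xs = hweight (length xs) (\<lambda>i. xs ! i)"
  by (simp add: list_weight_def hweight_def length_filter_conv_card)

lemma hweight_vec_mat_lin_comb:
  assumes "square_mat k M"
  shows "hweight k (vec_mat k x (mat_of M)) = list_weight (lin_comb k (map x [0..<k]) M)"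
proof -
  have "length (lin_comb k (map x [0..<k]) M) = k"
    using assms by (simp add: length_lin_comb square_mat_rows)
  with assms show ?thesis
    unfolding list_weight_eq_hweight by (auto simp: lin_comb_eq_vec_mat intro: hweight_cong)
qed

lemma list_weight_Nil [simp]: "list_weight [] = 0"
  and list_weight_Cons: "list_weight (c # cs) = (if c = 0 then list_weight cs else Suc (list_weight cs))"
  by (simp_all add: list_weight_def)

lemma map2_add_replicate_zero: "length v = k \<Longrightarrow> map2 (+) v (replicate k 0) = (v :: gf4 list)"
  by (simp add: list_eq_iff_nth_eq)

lemma map2_add_replicate_zero_left: "length v = k \<Longrightarrow> map2 (+) (replicate k 0) v = (v :: gf4 list)"
  by (simp add: list_eq_iff_nth_eq)

lemma map2_add_assoc:
  "length a = length b \<Longrightarrow> length b = length c \<Longrightarrow>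
    map2 (+) a (map2 (+) b c) = map2 (+) (map2 (+) a b) (c :: gf4 list)"
  by (simp add: list_eq_iff_nth_eq add.assoc)

lemma lin_comb_zero_coeffs:
  "list_weight cs = 0 \<Longrightarrow> \<forall>r\<in>set rs. length r = k \<Longrightarrow> lin_comb k cs rs = replicate k 0"
proof (induction k cs rs rule: lin_comb.induct)
  case (1 k c cs r rs)
  then have "c = 0" "lin_comb k cs rs = replicate k 0" "length r = k"
    by (simp_all add: list_weight_Cons split: if_splits)
  then show ?case
    by (simp add: list_eq_iff_nth_eq)
qed simp_all

lemma low_weight_check_sound:
  assumes "low_weight_check d rs t v w" "length cs = length rs" "length v = k"
    "\<forall>r\<in>set rs. length r = k" "list_weight cs \<le> t" "0 < w + list_weight cs"
  shows "d \<le> w + list_weight cs + list_weight (map2 (+) v (lin_comb k cs rs))"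
  using assms
proof (induction d rs t v w arbitrary: cs rule: low_weight_check.induct)
  case (1 d r rs t v w)
  then obtain c cs' where cs: "cs = c # cs'"
    by (cases cs) auto
  have lengths: "length cs' = length rs" "length r = k" "\<forall>r\<in>set rs. length r = k"
    "length (lin_comb k cs' rs) = k"
    using "1.prems" cs by (auto simp: length_lin_comb)
  show ?case
  proof (cases "c = 0")
    case True
    then have "lin_comb k cs (r # rs) = lin_comb k cs' rs"
      using lengths by (simp add: cs list_eq_iff_nth_eq)
    with "1.IH"(1)[of cs'] "1.prems" lengths True show ?thesis
      by (simp add: cs list_weight_Cons)
  next
    case False
    then have "c \<in> {1, GW, GV}"
      by (cases c) (simp_all add: zero_gf4_def one_gf4_def)
    with "1.prems"(1) have "low_weight_check d rs t (map2 (+) v (map ((*) c) r)) (Suc w)"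
      by auto
    moreover have "map2 (+) v (lin_comb k cs (r # rs))
        = map2 (+) (map2 (+) v (map ((*) c) r)) (lin_comb k cs' rs)"
      using lengths "1.prems"(3) by (simp add: cs map2_add_assoc)
    ultimately show ?thesis
      using "1.IH"(2)[of c cs'] "1.prems" lengths \<open>c \<in> {1, GW, GV}\<close> False
      by (simp add: cs list_weight_Cons)
  qed
next
  case ("2_1" d t v w)
  then show ?case
    by (simp add: map2_add_replicate_zero)
next
  case ("2_2" d r rs v w)
  then show ?case
    by (simp add: lin_comb_zero_coeffs map2_add_replicate_zero)
qed

lemma list_weight_map_upt: "list_weight (map x [0..<k]) = hweight k x"
  unfolding list_weight_eq_hweight by (auto intro: hweight_cong)

lemma low_weight_check_sys_weight:
  assumes "low_weight_check d M t (replicate k 0) 0" "square_mat k M"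
    and "0 < hweight k x" "hweight k x \<le> t"
  shows "d \<le> sys_weight k (mat_of M) x"
proof -
  have "length (map x [0..<k]) = length M"
    using assms(2) by (simp add: square_mat_def)
  with assms have "d \<le> 0 + list_weight (map x [0..<k])
      + list_weight (map2 (+) (replicate k 0) (lin_comb k (map x [0..<k]) M))"
    by (intro low_weight_check_sound) (simp_all add: list_weight_map_upt square_mat_rows)
  with assms(2) show ?thesis
    by (simp add: sys_weight_def list_weight_map_upt hweight_vec_mat_lin_comb length_lin_comb
        square_mat_rows map2_add_replicate_zero_left)
qed

lemma mat_of_mult_eq_id:
  assumes "square_mat k A" "square_mat k B" "map (\<lambda>r. lin_comb k r B) A = id_mat_list k"
  shows "\<forall>i<k. \<forall>j<k. (\<Sum>l<k. mat_of A i l * mat_of B l j) = unit_vec i j"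
proof (intro allI impI)
  fix i j
  assume "i < k" "j < k"
  with assms(1) have "lin_comb k (A ! i) B ! j = id_mat_list k ! i ! j"
    using arg_cong[OF assms(3), of "\<lambda>M. M ! i ! j"] by (simp add: square_mat_def)
  moreover have "length (A ! i) = k" "length B = k"
    using assms(1,2) \<open>i < k\<close> by (simp_all add: square_mat_def list_all_iff)
  ultimately show "(\<Sum>l<k. mat_of A i l * mat_of B l j) = unit_vec i j"
    using assms(2) \<open>i < k\<close> \<open>j < k\<close>
    by (simp add: nth_lin_comb square_mat_rows mat_of_def id_mat_list_def unit_vec_def)
qed

lemma sys_certificate_hermitian:
  assumes "sys_certificate k d A B N"
  shows "hermitian k (mat_of A)"
proof -
  have herm: "\<forall>i\<in>set [0..<k]. \<forall>j\<in>set [0..<k]. A ! j ! i = (A ! i ! j) ^ 2"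
    using assms unfolding sys_certificate_def list_all_iff by blast
  show ?thesis
    unfolding hermitian_def mat_of_def
    by (intro allI impI, rule herm[rule_format]) simp_all
qed

lemma square_mat_add_id:
  assumes "square_mat k A"
  shows "square_mat k (map2 (map2 (+)) A (id_mat_list k))"
    and "i < k \<Longrightarrow> j < k \<Longrightarrow> mat_of (map2 (map2 (+)) A (id_mat_list k)) i j = mat_of A i j + unit_vec i j"
  using assms
  by (auto simp: square_mat_def list_all_length id_mat_list_def mat_of_def unit_vec_def)

lemma sys_certificate_fixed_vector_free:
  assumes "sys_certificate k d A B N"
  shows "fixed_vector_free k (mat_of A)"
  unfolding fixed_vector_free_def
proof (intro ballI impI)
  fix u
  assume u: "u \<in> vecs k" and fixed: "\<forall>l<k. vec_mat k u (mat_of A) l = u l"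
  let ?P = "map2 (map2 (+)) A (id_mat_list k)"
  have A: "square_mat k A" and N: "square_mat k N"
    and PN: "map (\<lambda>r. lin_comb k r N) ?P = id_mat_list k"
    using assms by (simp_all add: sys_certificate_def)
  \<comment> \<open>\<open>u (A + I) = u + u = 0\<close>, and \<open>A + I\<close> is invertible with inverse \<open>N\<close>.\<close>
  have "vec_mat k u (mat_of ?P) l = 0" if "l < k" for l
  proof -
    have "vec_mat k u (mat_of ?P) l = (\<Sum>j<k. u j * mat_of A j l + u j * unit_vec j l)"
      unfolding vec_mat_def using A that by (intro sum.cong) (simp_all add: square_mat_add_id distrib_left)
    also have "\<dots> = vec_mat k u (mat_of A) l + u l"
      using that by (simp add: sum.distrib vec_mat_def sum_unit_vec_right)
    finally show ?thesis
      using fixed that by simp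
  qed
  then have "vec_mat k (vec_mat k u (mat_of ?P)) (mat_of N) = vec_mat k (\<lambda>i. 0) (mat_of N)"
    by (rule vec_mat_cong)
  moreover have "vec_mat k (vec_mat k u (mat_of ?P)) (mat_of N) l = u l" if "l < k" for l
    using mat_of_mult_eq_id[OF square_mat_add_id(1)[OF A] N PN] that by (rule vec_mat_inverse)
  ultimately have "u l = 0" if "l < k" for l
    using that by (metis vec_mat_zero)
  with u show "u = (\<lambda>i. 0)"
    by (auto simp: vecs_def fun_eq_iff not_less[symmetric])
qed

lemma sys_weight_unit_vec:
  assumes "square_mat k A" "r < k"
  shows "sys_weight k (mat_of A) (unit_vec r) = Suc (list_weight (A ! r))"
proof -
  have "length (A ! r) = k"
    using assms by (simp add: square_mat_def list_all_iff)
  moreover have "vec_mat k (unit_vec r) (mat_of A) = (\<lambda>l. A ! r ! l)"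
    using assms(2) by (simp add: vec_mat_unit_vec mat_of_def fun_eq_iff)
  ultimately show ?thesis
    using assms(2) by (simp add: sys_weight_def hweight_unit_vec list_weight_eq_hweight)
qed

lemma sys_certificate_min_weight:
  assumes "sys_certificate k d A B N"
  shows "sys_min_weight k (mat_of A) d"
  unfolding sys_min_weight_def
proof
  define t where "t = (d - 1) div 2"
  have A: "square_mat k A" and B: "square_mat k B"
    and AB: "map (\<lambda>r. lin_comb k r B) A = id_mat_list k"
    and check_A: "low_weight_check d A t (replicate k 0) 0"
    and check_B: "low_weight_check d B t (replicate k 0) 0"
    using assms by (simp_all add: sys_certificate_def t_def)
  show "\<forall>x\<in>vecs k. x \<noteq> (\<lambda>i. 0) \<longrightarrow> d \<le> sys_weight k (mat_of A) x"
  proof (intro ballI impI)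
    fix x
    assume "x \<in> vecs k" "x \<noteq> (\<lambda>i. 0)"
    then have "0 < hweight k x"
      by (auto simp: hweight_eq_0_iff vecs_def fun_eq_iff not_less[symmetric] neq0_conv[symmetric])
    moreover have "d \<le> 2 * t + 2"
      by (simp add: t_def)
    ultimately show "d \<le> sys_weight k (mat_of A) x"
      using sys_weight_ge_of_inverse[OF mat_of_mult_eq_id[OF A B AB]
          low_weight_check_sys_weight[OF check_A A] low_weight_check_sys_weight[OF check_B B]]
      by blast
  qed
  obtain r where r: "r < k" "Suc (list_weight (A ! r)) = d"
    using assms A by (auto simp: sys_certificate_def list_ex_iff in_set_conv_nth square_mat_def)
  with A have "sys_weight k (mat_of A) (unit_vec r) = d"
    by (simp add: sys_weight_unit_vec)
  moreover have "unit_vec r \<noteq> (\<lambda>i. 0)"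
    by (auto simp: unit_vec_def fun_eq_iff)
  ultimately show "\<exists>x\<in>vecs k. x \<noteq> (\<lambda>i. 0) \<and> sys_weight k (mat_of A) x = d"
    using r(1) unit_vec_in_vecs by blast
qed

lemma herm_fsd_LCD_of_sys_certificate:
  assumes "sys_certificate k d A B N" "0 < m"
  shows "\<exists>C. herm_fsd_LCD (2 * (m * k)) (m * k) d C"
proof -
  have "0 < k"
    using assms(1) by (auto simp: sys_certificate_def square_mat_def list_ex_iff)
  with assms show ?thesis
    by (blast intro: herm_fsd_LCD_block_diag sys_certificate_hermitian
        sys_certificate_fixed_vector_free sys_certificate_min_weight)
qed

definition A8 :: "gf4 list list" where
  "A8 =
    [[G0, GV, GV, G0, G1, G1, GW, G0],
     [GW, G1, G1, GW, GW, G1, GV, G1],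
     [GW, G1, G1, G0, G0, G0, G1, G1],
     [G0, GV, G0, G1, GV, G1, GV, GW],
     [G1, GV, G0, GW, G0, GW, GV, GW],
     [G1, G1, G0, G1, GV, G0, GV, G1],
     [GV, GW, G1, GW, GW, GW, G1, G0],
     [G0, G1, G1, GV, GV, G1, G0, G0]]"

definition A8_inv :: "gf4 list list" where
  "A8_inv =
    [[G1, G1, G0, GW, G1, G0, GV, G1],
     [G1, G0, G1, GW, G1, G0, G1, GV],
     [G0, G1, G0, G0, GW, GW, GV, GV],
     [GV, GV, G0, G0, GV, GW, G0, G1],
     [G1, G1, GV, GW, G1, GV, GW, GV],
     [G0, G0, GV, GV, GW, G1, GV, G0],
     [GW, G1, GW, G0, GV, GW, G0, GW],
     [G1, GW, GW, G1, GW, G0, GV, G0]]"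

definition A8_add_id_inv :: "gf4 list list" where
  "A8_add_id_inv =
    [[G1, G0, GV, G1, GV, G0, GV, G0],
     [G0, G1, GW, GW, G1, G1, GW, GV],
     [GW, GV, G1, G1, GV, GW, G0, GV],
     [G1, GV, G1, G1, GW, G1, GW, GW],
     [GW, G1, GW, GV, G1, G1, G1, G1],
     [G0, G1, GV, G1, G1, G0, GV, GW],
     [GW, GV, G0, GV, G1, GW, G0, GW],
     [G0, GW, GW, GV, G1, GV, GV, G1]]"

definition A10 :: "gf4 list list" where
  "A10 =
    [[G0, G0, GW, G0, G0, GV, G1, G1, G1, GW],
     [G0, G0, GW, GV, G1, G1, G0, GW, G1, G1],
     [GV, GV, G1, GV, G0, G0, GV, GW, GV, G0],
     [G0, GW, GW, G1, GW, GV, GV, G0, GV, GW],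
     [G0, G1, G0, GV, G1, GW, GV, GW, G1, GW],
     [GW, G1, G0, GW, GV, G0, GW, GW, G1, G1],
     [G1, G0, GW, GW, GW, GV, G1, GW, GW, GV],
     [G1, GV, GV, G0, GV, GV, GV, G0, G0, G1],
     [G1, G1, GW, GW, G1, G1, GV, G0, G1, G1],
     [GV, G1, G0, GV, GV, G1, GW, G1, G1, G0]]"

definition A10_inv :: "gf4 list list" where
  "A10_inv =
    [[G0, GW, G0, G0, GW, G1, GV, G1, GV, GV],
     [GV, G0, G0, GV, G1, GV, G0, GW, GV, G0],
     [G0, G0, G1, G1, GV, GV, G1, G1, GW, G0],
     [G0, GW, G1, G1, GW, G0, GW, G0, GW, G1],
     [GV, G1, GW, GV, G0, G0, GW, GV, GV, G1],
     [G1, GW, GW, G0, G0, G1, G0, G1, G0, GV],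
     [GW, G0, G1, GV, GV, G0, G1, G1, G1, GV],
     [G1, GV, G1, G0, GW, G1, G1, G0, G0, G0],
     [GW, GW, GV, GV, GW, G0, G1, G0, G0, G1],
     [GW, G0, G0, G1, G1, GW, GW, G0, G1, G0]]"

definition A10_add_id_inv :: "gf4 list list" where
  "A10_add_id_inv =
    [[G1, GV, GV, GW, GV, G0, GW, GW, G1, G1],
     [GW, G1, G0, GW, GV, G0, G0, G0, G1, G1],
     [GW, G0, G0, GW, G0, GW, G1, G0, GW, GV],
     [GV, GV, GV, G1, G1, G0, GV, G1, G0, G1],
     [GW, GW, G0, G1, G0, G0, G0, GW, GW, GV],
     [G0, G0, GV, G0, G0, G0, G1, GV, G0, G0],
     [GV, G0, G1, GW, G0, G1, G1, GV, G1, GW],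
     [GV, G0, G0, G1, GV, GW, GW, G1, GW, GW],
     [G1, G1, GV, G0, GV, G0, G1, GV, G0, GW],
     [G1, G1, GW, G1, GW, G0, GV, GV, GV, G1]]"

definition A12 :: "gf4 list list" where
  "A12 =
    [[G0, GV, GW, G1, G1, GW, G0, G0, GV, G1, GV, G1],
     [GW, G0, GW, G0, GV, G0, G1, GW, G0, GV, G1, G0],
     [GV, GV, G1, G1, GW, GV, G1, G1, GW, G1, GV, GV],
     [G1, G0, G1, G1, GV, GW, G0, G0, GV, G0, G1, GV],
     [G1, GW, GV, GW, G0, G1, G1, GV, GV, GW, GW, GW],
     [GV, G0, GW, GV, G1, G0, GV, GW, G1, GW, G1, GW],
     [G0, G1, G1, G0, G1, GW, G0, G0, GW, GW, G1, G0],
     [G0, GV, G1, G0, GW, GV, G0, G1, G0, GV, G1, GV],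
     [GW, G0, GV, GW, GW, G1, GV, G0, G0, G1, G1, G0],
     [G1, GW, G1, G0, GV, GV, GV, GW, G1, G1, G0, G1],
     [GW, G1, GW, G1, GV, G1, G1, G1, G1, G0, G0, G0],
     [G1, G0, GW, GW, GV, GV, G0, GW, G0, G1, G0, G0]]"

definition A12_inv :: "gf4 list list" where
  "A12_inv =
    [[G0, GV, GV, GW, G1, GW, GV, GW, GW, GV, GV, G1],
     [GW, G1, G1, G0, GW, G1, G0, GV, GW, GW, G1, GV],
     [GW, G1, G0, G1, GV, G1, GV, GW, G0, GV, GV, G1],
     [GV, G0, G1, G1, G1, GW, G1, GV, GW, G0, G0, G1],
     [G1, GV, GW, G1, G1, G1, G0, GV, G0, G1, G0, GW],
     [GV, G1, G1, GV, G1, G0, GV, G0, GW, G0, G0, G0],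
     [GW, G0, GW, G1, G0, GW, G1, GW, G0, GW, GV, GW],
     [GV, GW, GV, GW, GW, G0, GV, G0, G0, GV, G1, G0],
     [GV, GV, G0, GV, G0, GV, G0, G0, G1, G0, GW, G1],
     [GW, GV, GW, G0, G1, G0, GV, GW, G0, G0, G0, G1],
     [GW, G1, GW, G0, G0, G0, GW, G1, GV, G0, G1, G0],
     [G1, GW, G1, G1, GV, G0, GV, G0, G1, G1, G0, G1]]"

definition A12_add_id_inv :: "gf4 list list" where
  "A12_add_id_inv =
    [[G1, GV, GW, GV, G0, G1, G0, G1, GW, G1, G0, GW],
     [GW, G1, GW, GW, GW, GV, G1, G0, GW, G1, G0, G1],
     [GV, GV, G0, G0, G1, G0, G0, GV, GV, G1, GV, GW],
     [GW, GV, G0, G0, GW, G1, GV, G0, G0, GV, GV, G0],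
     [G0, GV, G1, GV, G0, GV, GW, G0, GV, GW, G1, GW],
     [G1, GW, G0, G1, GW, G1, GV, GV, G0, GV, GW, GW],
     [G0, G1, G0, GW, GV, GW, G0, G1, GW, G0, GV, G0],
     [G1, G0, GW, G0, G0, GW, G1, G0, G0, G1, G1, GW],
     [GV, GV, GW, G0, GW, G0, GV, G0, G0, G0, G0, G1],
     [G1, G1, G1, GW, GV, GW, G0, G1, G0, G1, G1, GV],
     [G0, G0, GW, GW, G1, GV, GW, G1, G0, G1, G0, G1],
     [GV, G1, GV, G0, GV, GV, G0, GV, G1, GW, G1, G0]]"

lemma sys_certificate_A8: "sys_certificate 8 6 A8 A8_inv A8_add_id_inv"
  unfolding A8_def A8_inv_def A8_add_id_inv_def by code_simp

lemma sys_certificate_A10: "sys_certificate 10 7 A10 A10_inv A10_add_id_inv"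
  unfolding A10_def A10_inv_def A10_add_id_inv_def by code_simp

lemma sys_certificate_A12: "sys_certificate 12 8 A12 A12_inv A12_add_id_inv"
  unfolding A12_def A12_inv_def A12_add_id_inv_def by code_simp

theorem theorem8:
  fixes s :: nat
  assumes "s \<ge> 1"
  shows "(\<exists>C. herm_fsd_LCD (32*s) (16*s) 6 C) \<and>
         (\<exists>C. herm_fsd_LCD (40*s) (20*s) 7 C) \<and>
         (\<exists>C. herm_fsd_LCD (48*s) (24*s) 8 C)"
proof -
  have m: "0 < 2 * s"
    using assms by simp
  show ?thesis
    using herm_fsd_LCD_of_sys_certificate[OF sys_certificate_A8 m]
      herm_fsd_LCD_of_sys_certificate[OF sys_certificate_A10 m]
      herm_fsd_LCD_of_sys_certificate[OF sys_certificate_A12 m]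
    by (simp add: mult_ac)
qed

end
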